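(* Let $G$ be a graph, $X\subseteq T\subseteq V(G)$, $k'$ an integer, and $H=H_T$ the torso of $T$ in $G$. If there exists a connected $(X,T,k')$-witness $(L,R)$, then there exists a connected $(X,T,k')$-witness $(L',R')$ with $(L'\setminus R')\cap T=(L\setminus R)\cap T$ which further satisfies $N_H((L'\setminus R')\cap T)\supseteq L'\cap R'\cap T$.
   Context: A vertex cut of $G$ is an ordered pair $(L,R)$ with $L\cup R=V(G)$, $L\setminus R,R\setminus L\ne\emptyset$ and no edge between $L\setminus R$ and $R\setminus L$. The torso $H_T$ of $T$ in $G$ is the graph with vertex set $T$ and an edge $\{u,v\}$ whenever $\{u,v\}\in E(G)$ or $u,v\in N_G(D)$ for some connected component $D$ of $G\setminus T$. An $(X,T,k')$-witness is a vertex cut $(L,R)$ of $G$ with $|L\cap R|\le k'$, $|L\cap T|>|L\cap R|$, and $X\subseteq R$; it is connected if $H_T[(L\setminus R)\cap T]$ is connected. $N_H(S)$ denotes the set of vertices outside $S$ adjacent in $H$ to some vertex of $S$. *)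

theory Defs
  imports Main
begin

definition graph :: "'a set \<Rightarrow> 'a set set \<Rightarrow> bool" where
  "graph V E \<longleftrightarrow> finite V \<and> (\<forall>e\<in>E. e \<subseteq> V \<and> card e = 2)"

definition adj_in :: "'a set set \<Rightarrow> 'a set \<Rightarrow> 'a \<Rightarrow> 'a \<Rightarrow> bool" where
  "adj_in E S x y \<longleftrightarrow> x \<in> S \<and> y \<in> S \<and> {x, y} \<in> E"

definition connected_set :: "'a set set \<Rightarrow> 'a set \<Rightarrow> bool" where
  "connected_set E S \<longleftrightarrow> (\<forall>u\<in>S. \<forall>v\<in>S. (adj_in E S)\<^sup>*\<^sup>* u v)"

definition component :: "'a set set \<Rightarrow> 'a set \<Rightarrow> 'a set \<Rightarrow> bool" where
  "component E S D \<longleftrightarrow> (\<exists>u\<in>S. D = {v. (adj_in E S)\<^sup>*\<^sup>* u v})"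

definition nbhd :: "'a set \<Rightarrow> 'a set set \<Rightarrow> 'a set \<Rightarrow> 'a set" where
  "nbhd V E S = {v \<in> V - S. \<exists>u\<in>S. {u, v} \<in> E}"

text \<open>Edge set of the torso H_T of T in G = (V,E); its vertex set is T.\<close>
definition torso_edges :: "'a set \<Rightarrow> 'a set set \<Rightarrow> 'a set \<Rightarrow> 'a set set" where
  "torso_edges V E T = {{u, v} | u v. u \<in> T \<and> v \<in> T \<and> u \<noteq> v \<and>
      ({u, v} \<in> E \<or> (\<exists>D. component E (V - T) D \<and> u \<in> nbhd V E D \<and> v \<in> nbhd V E D))}"

definition vertex_cut :: "'a set \<Rightarrow> 'a set set \<Rightarrow> 'a set \<Rightarrow> 'a set \<Rightarrow> bool" where
  "vertex_cut V E L R \<longleftrightarrow> L \<union> R = V \<and> L - R \<noteq> {} \<and> R - L \<noteq> {} \<and>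
      (\<forall>u\<in>L - R. \<forall>v\<in>R - L. {u, v} \<notin> E)"

definition witness :: "'a set \<Rightarrow> 'a set set \<Rightarrow> 'a set \<Rightarrow> 'a set \<Rightarrow> int \<Rightarrow> 'a set \<Rightarrow> 'a set \<Rightarrow> bool" where
  "witness V E X T k L R \<longleftrightarrow> vertex_cut V E L R \<and> int (card (L \<inter> R)) \<le> k \<and>
      card (L \<inter> T) > card (L \<inter> R) \<and> X \<subseteq> R"

definition connected_witness :: "'a set \<Rightarrow> 'a set set \<Rightarrow> 'a set \<Rightarrow> 'a set \<Rightarrow> int \<Rightarrow> 'a set \<Rightarrow> 'a set \<Rightarrow> bool" where
  "connected_witness V E X T k L R \<longleftrightarrow> witness V E X T k L R \<and>
      connected_set (torso_edges V E T) ((L - R) \<inter> T)"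

end

theory Submission
  imports Defs
begin

text \<open>Let \<open>A = (L - R) \<inter> T\<close>. Replace the side \<open>L - R\<close> by \<open>U\<close>, the part of \<open>L - R\<close> lying in
  \<open>T\<close> or in a component of \<open>G - T\<close> attached to \<open>A\<close>, and take the cut \<open>(U \<union> N(U), V - U)\<close>.
  Then \<open>N(U) \<subseteq> L \<inter> R\<close>, so the separator only shrinks, while its vertices outside \<open>T\<close>
  are fewer than \<open>|A|\<close> by the witness inequality; hence the new cut is again a witness with
  the same set \<open>A\<close>. Every vertex of \<open>N(U) \<inter> T\<close> is adjacent to \<open>A\<close> either directly or through
  an attached component, i.e. it is a torso neighbour of \<open>A\<close>.\<close>

lemma adj_in_rtranclp_mem:
  assumes "(adj_in E S)\<^sup>*\<^sup>* y z" "y \<in> S"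
  shows "z \<in> S"
  using assms by (induction rule: rtranclp_induct) (auto simp: adj_in_def)

lemma component_subset:
  assumes "component E S D"
  shows "D \<subseteq> S"
  using assms adj_in_rtranclp_mem by (fastforce simp: component_def)

lemma component_adj_closed:
  assumes "component E S D" "z \<in> D" "w \<in> S" "{z, w} \<in> E"
  shows "w \<in> D"
proof -
  obtain u where D: "D = {v. (adj_in E S)\<^sup>*\<^sup>* u v}"
    using assms(1) by (auto simp: component_def)
  have "adj_in E S z w"
    using assms component_subset by (fastforce simp: adj_in_def)
  then show ?thesis
    using assms(2) D by (auto intro: rtranclp.rtrancl_into_rtrancl)
qed

definition attached_components :: "'a set \<Rightarrow> 'a set set \<Rightarrow> 'a set \<Rightarrow> 'a set \<Rightarrow> 'a set" where
  "attached_components V E T A = \<Union>{D. component E (V - T) D \<and> A \<inter> nbhd V E D \<noteq> {}}"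

lemma nbhd_subset_torso_nbhd:
  assumes "A \<subseteq> T" "T \<subseteq> V" "A \<subseteq> U" "U \<subseteq> A \<union> attached_components V E T A"
  shows "nbhd V E U \<inter> T \<subseteq> nbhd T (torso_edges V E T) A"
proof
  fix w assume "w \<in> nbhd V E U \<inter> T"
  then obtain u where w: "w \<in> T" "w \<notin> U" and u: "u \<in> U" "{u, w} \<in> E"
    by (auto simp: nbhd_def)
  have "w \<notin> A" using w assms(3) by auto
  have "\<exists>a\<in>A. {a, w} \<in> torso_edges V E T"
  proof (cases "u \<in> A")
    case True
    then have "u \<noteq> w" using \<open>w \<notin> A\<close> by auto
    with True u w assms(1) show ?thesis
      by (auto simp: torso_edges_def)
  next
    case False
    then have "u \<in> attached_components V E T A" using u assms(4) by auto
    then obtain D a where D: "component E (V - T) D" "u \<in> D"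
      and a: "a \<in> A" "a \<in> nbhd V E D"
      unfolding attached_components_def by blast
    have "w \<in> nbhd V E D"
      using D component_subset w u assms(2) by (fastforce simp: nbhd_def)
    moreover have "a \<noteq> w" using a \<open>w \<notin> A\<close> by auto
    ultimately have "{a, w} \<in> torso_edges V E T"
      using D a w assms(1) by (auto simp: torso_edges_def)
    then show ?thesis using a by blast
  qed
  then show "w \<in> nbhd T (torso_edges V E T) A"
    using w \<open>w \<notin> A\<close> by (auto simp: nbhd_def)
qed

definition attached_side :: "'a set \<Rightarrow> 'a set set \<Rightarrow> 'a set \<Rightarrow> 'a set \<Rightarrow> 'a set \<Rightarrow> 'a set" where
  "attached_side V E T L R = (L - R) \<inter> (T \<union> attached_components V E T ((L - R) \<inter> T))"

lemma nbhd_attached_side_subset_separator: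
  assumes "vertex_cut V E L R"
  shows "nbhd V E (attached_side V E T L R) \<subseteq> L \<inter> R"
proof
  define A where "A = (L - R) \<inter> T"
  define U where "U = attached_side V E T L R"
  have U: "U = (L - R) \<inter> (T \<union> attached_components V E T A)"
    by (simp add: U_def A_def attached_side_def)
  fix w assume "w \<in> nbhd V E U"
  then obtain u where w: "w \<in> V" "w \<notin> U" and u: "u \<in> U" "{u, w} \<in> E"
    by (auto simp: nbhd_def)
  have "u \<in> L - R" using u U by auto
  then have "w \<in> L"
    using assms(1) w u by (auto simp: vertex_cut_def)
  show "w \<in> L \<inter> R"
  proof (rule ccontr)
    assume "w \<notin> L \<inter> R"
    with \<open>w \<in> L\<close> have "w \<in> L - R" by auto
    then have "w \<notin> T" using w U by auto
    have "w \<in> attached_components V E T A"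
    proof (cases "u \<in> T")
      case True
      define D where "D = {v. (adj_in E (V - T))\<^sup>*\<^sup>* w v}"
      have D: "component E (V - T) D"
        using w \<open>w \<notin> T\<close> by (auto simp: component_def D_def)
      have "w \<in> D" by (simp add: D_def)
      then have "u \<in> A \<inter> nbhd V E D"
        using True u \<open>u \<in> L - R\<close> assms(1) component_subset[OF D]
        by (auto simp: A_def nbhd_def vertex_cut_def insert_commute)
      with D \<open>w \<in> D\<close> show ?thesis
        unfolding attached_components_def by blast
    next
      case False
      then have "u \<in> attached_components V E T A" using u U by auto
      then obtain D where D: "component E (V - T) D" "u \<in> D" "A \<inter> nbhd V E D \<noteq> {}"
        unfolding attached_components_def by blast
      moreover have "w \<in> D"
        using component_adj_closed[of E "V - T" D u w] D w u \<open>w \<notin> T\<close> by blast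
      ultimately show ?thesis
        unfolding attached_components_def by blast
    qed
    then show False using \<open>w \<in> L - R\<close> w U by auto
  qed
qed

lemma vertex_cut_closed_nbhd:
  assumes "U \<subseteq> V" "U \<noteq> {}" "V - (U \<union> nbhd V E U) \<noteq> {}"
  shows "vertex_cut V E (U \<union> nbhd V E U) (V - U)"
  using assms by (auto simp: vertex_cut_def nbhd_def)

lemma closed_nbhd_diff: "U \<subseteq> V \<Longrightarrow> (U \<union> nbhd V E U) - (V - U) = U"
  and closed_nbhd_Int: "(U \<union> nbhd V E U) \<inter> (V - U) = nbhd V E U"
  by (auto simp: nbhd_def)

lemma card_Un_Int_greater_mono:
  assumes "finite A" "finite S" "A \<inter> S = {}" "N \<subseteq> S"
    and "card S < card (A \<union> S \<inter> T)"
  shows "card N < card (A \<union> N \<inter> T)"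
proof -
  have "finite N" using assms(2,4) finite_subset by blast
  have "card (A \<union> S \<inter> T) = card A + card (S \<inter> T)"
    using assms(1-3) by (intro card_Un_disjoint) auto
  moreover have "card S = card (S \<inter> T) + card (S - T)"
    using assms(2) by (simp add: card_Int_Diff)
  moreover have "card (N - T) \<le> card (S - T)"
    using assms(2,4) by (intro card_mono) auto
  moreover have "card (A \<union> N \<inter> T) = card A + card (N \<inter> T)"
    using assms(1,3,4) \<open>finite N\<close> by (intro card_Un_disjoint) auto
  moreover have "card N = card (N \<inter> T) + card (N - T)"
    using \<open>finite N\<close> by (simp add: card_Int_Diff)
  ultimately show ?thesis using assms(5) by linarith
qed

lemma witness_closed_nbhd:
  assumes "witness V E X T k L R" "finite V"
    and "U \<subseteq> L - R" "(L - R) \<inter> T \<subseteq> U" "nbhd V E U \<subseteq> L \<inter> R"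
  shows "witness V E X T k (U \<union> nbhd V E U) (V - U)"
proof -
  define A where "A = (L - R) \<inter> T"
  define N where "N = nbhd V E U"
  have cut: "vertex_cut V E L R" and k: "int (card (L \<inter> R)) \<le> k"
    and excess: "card (L \<inter> R) < card (L \<inter> T)" and "X \<subseteq> R"
    using assms(1) by (auto simp: witness_def)
  have "L \<union> R = V" "R - L \<noteq> {}" using cut by (auto simp: vertex_cut_def)
  then have "finite L" "U \<subseteq> V" using assms(2,3) by (metis finite_Un, blast)
  have "L \<inter> T = A \<union> (L \<inter> R) \<inter> T" by (auto simp: A_def)
  with excess have "card (L \<inter> R) < card (A \<union> (L \<inter> R) \<inter> T)" by (simp only:)
  moreover have "finite A" using \<open>finite L\<close> by (simp add: A_def)
  moreover have "A \<inter> (L \<inter> R) = {}" by (auto simp: A_def)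
  ultimately have "card N < card (A \<union> N \<inter> T)"
    using card_Un_Int_greater_mono[of A "L \<inter> R" N T] \<open>finite L\<close> assms(5)
    by (simp add: N_def)
  moreover have "(U \<union> N) \<inter> T = A \<union> N \<inter> T" using assms(3,4) by (auto simp: A_def)
  ultimately have new_excess: "card N < card ((U \<union> N) \<inter> T)" by (simp only:)
  have "U \<noteq> {}"
  proof
    assume "U = {}"
    with assms(4) have "L \<inter> T \<subseteq> L \<inter> R" by auto
    with excess \<open>finite L\<close> show False by (meson card_mono finite_Int leD)
  qed
  moreover have "R - L \<subseteq> V - (U \<union> N)" using \<open>L \<union> R = V\<close> assms(3,5) by (auto simp: N_def)
  ultimately have "vertex_cut V E (U \<union> N) (V - U)"
    using vertex_cut_closed_nbhd \<open>U \<subseteq> V\<close> \<open>R - L \<noteq> {}\<close> unfolding N_def by blast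
  moreover have "card N \<le> card (L \<inter> R)"
    using \<open>finite L\<close> assms(5) by (simp add: N_def card_mono)
  moreover have "X \<subseteq> V - U" using \<open>X \<subseteq> R\<close> \<open>L \<union> R = V\<close> assms(3) by auto
  ultimately show ?thesis
    using k new_excess by (simp add: witness_def closed_nbhd_Int N_def)
qed

theorem mainTheorem12:
  fixes V :: "'a set" and E :: "'a set set" and X T L R :: "'a set" and k :: int
  assumes "graph V E"
    and "X \<subseteq> T" and "T \<subseteq> V"
    and "connected_witness V E X T k L R"
  shows "\<exists>L' R'. connected_witness V E X T k L' R' \<and>
           (L' - R') \<inter> T = (L - R) \<inter> T \<and>
           nbhd T (torso_edges V E T) ((L' - R') \<inter> T) \<supseteq> L' \<inter> R' \<inter> T"
proof -
  define A where "A = (L - R) \<inter> T"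
  define U where "U = attached_side V E T L R"
  have wit: "witness V E X T k L R" and conn: "connected_set (torso_edges V E T) A"
    using assms(4) by (auto simp: connected_witness_def A_def)
  then have cut: "vertex_cut V E L R" by (simp add: witness_def)
  have U: "U \<subseteq> L - R" "A \<subseteq> U" "U \<subseteq> A \<union> attached_components V E T A"
    by (auto simp: U_def A_def attached_side_def)
  have "U \<subseteq> V" using U(1) cut by (auto simp: vertex_cut_def)
  have "nbhd V E U \<subseteq> L \<inter> R"
    using nbhd_attached_side_subset_separator[OF cut] by (simp add: U_def)
  with wit U assms(1) have "witness V E X T k (U \<union> nbhd V E U) (V - U)"
    by (intro witness_closed_nbhd) (auto simp: graph_def A_def)
  moreover have "(U \<union> nbhd V E U - (V - U)) \<inter> T = A"
    using U(1,2) \<open>U \<subseteq> V\<close> by (auto simp: closed_nbhd_diff A_def)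
  moreover have "nbhd V E U \<inter> T \<subseteq> nbhd T (torso_edges V E T) A"
    using nbhd_subset_torso_nbhd[OF _ assms(3) U(2,3)] by (simp add: A_def)
  ultimately show ?thesis
    using conn by (metis A_def closed_nbhd_Int connected_witness_def)
qed

end
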